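(* A real symmetric $2\times 2$ matrix is perfect copositive if and only if it is a classical perfect matrix whose off-diagonal entry is negative.
   Context: For $B\in\mathcal{S}^n$ (real symmetric $n\times n$ matrices) write $B[v]=v^\top Bv$. Classical notions: for positive definite $Q$, $\min Q=\min\{Q[v]: v\in\mathbb{Z}^n\setminus\{0\}\}$ and $\operatorname{Min}Q=\{v\in\mathbb{Z}^n: Q[v]=\min Q\}$; a positive definite $Q$ is (classically) perfect if it is the unique $Q'\in\mathcal{S}^n$ with $Q'[v]=\min Q$ for all $v\in\operatorname{Min}Q$. Copositive notions: $\mathcal{COP}^n=\{B\in\mathcal{S}^n: B[x]\ge 0\ \forall x\in\mathbb{R}^n_{\ge0}\}$; $B$ is strictly copositive if it lies in the interior of $\mathcal{COP}^n$; $\min_{\mathcal{COP}}B=\inf\{B[v]: v\in\mathbb{Z}^n_{\ge0}\setminus\{0\}\}$, $\operatorname{Min}_{\mathcal{COP}}B=\{v\in\mathbb{Z}^n_{\ge0}: B[v]=\min_{\mathcal{COP}}B\}$; a strictly copositive $P$ is perfect copositive if it is the unique $Q\in\mathcal{S}^n$ with $Q[v]=\min_{\mathcal{COP}}P$ for all $v\in\operatorname{Min}_{\mathcal{COP}}P$. *)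

theory Defs
  imports "HOL-Analysis.Analysis"
begin

definition symm :: "real^'n^'n \<Rightarrow> bool" where
  "symm B \<longleftrightarrow> transpose B = B"

definition qf :: "real^'n^'n \<Rightarrow> real^'n \<Rightarrow> real" where
  "qf B v = v \<bullet> (B *v v)"

definition int_vec :: "real^'n \<Rightarrow> bool" where
  "int_vec v \<longleftrightarrow> (\<forall>i. v $ i \<in> \<int>)"

definition nonneg_vec :: "real^'n \<Rightarrow> bool" where
  "nonneg_vec v \<longleftrightarrow> (\<forall>i. v $ i \<ge> 0)"

definition pos_def :: "real^'n^'n \<Rightarrow> bool" where
  "pos_def Q \<longleftrightarrow> symm Q \<and> (\<forall>x. x \<noteq> 0 \<longrightarrow> qf Q x > 0)"

definition min_cl :: "real^'n^'n \<Rightarrow> real" where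
  "min_cl Q = Inf {qf Q v | v. int_vec v \<and> v \<noteq> 0}"

definition Min_cl :: "real^'n^'n \<Rightarrow> (real^'n) set" where
  "Min_cl Q = {v. int_vec v \<and> qf Q v = min_cl Q}"

definition perfect :: "real^'n^'n \<Rightarrow> bool" where
  "perfect Q \<longleftrightarrow> pos_def Q \<and>
     (\<forall>Q'. symm Q' \<longrightarrow> (\<forall>v \<in> Min_cl Q. qf Q' v = min_cl Q) \<longrightarrow> Q' = Q)"

definition copositive :: "real^'n^'n \<Rightarrow> bool" where
  "copositive B \<longleftrightarrow> symm B \<and> (\<forall>x. nonneg_vec x \<longrightarrow> qf B x \<ge> 0)"

definition strictly_copositive :: "real^'n^'n \<Rightarrow> bool" where
  "strictly_copositive B \<longleftrightarrow> symm B \<and>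
     (\<exists>e>0. \<forall>B'. symm B' \<and> norm (B' - B) < e \<longrightarrow> copositive B')"

definition min_cop :: "real^'n^'n \<Rightarrow> real" where
  "min_cop B = Inf {qf B v | v. int_vec v \<and> nonneg_vec v \<and> v \<noteq> 0}"

definition Min_cop :: "real^'n^'n \<Rightarrow> (real^'n) set" where
  "Min_cop B = {v. int_vec v \<and> nonneg_vec v \<and> qf B v = min_cop B}"

definition perfect_copositive :: "real^'n^'n \<Rightarrow> bool" where
  "perfect_copositive P \<longleftrightarrow> strictly_copositive P \<and>
     (\<forall>Q. symm Q \<longrightarrow> (\<forall>v \<in> Min_cop P. qf Q v = min_cop P) \<longrightarrow> Q = P)"

end

theory Submission
  imports Defs
begin

text \<open>Only the cross term \<open>2 A\<^sub>1\<^sub>2 x\<^sub>1 x\<^sub>2\<close> of \<open>A[x]\<close> sees the signs of the coordinates.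
  If \<open>A\<^sub>1\<^sub>2 < 0\<close>, replacing \<open>x\<close> by \<open>|x|\<close> never increases \<open>A[x]\<close>, and strictly decreases it
  when \<open>x\<^sub>1 x\<^sub>2 < 0\<close>. Hence the classical and the copositive minimum agree, every classical
  minimal vector is a copositive one up to sign, and the two uniqueness conditions coincide;
  moreover the uniform bound \<open>A[x] \<ge> t |x|\<^sup>2\<close> on the nonnegative orthant, which is what strict
  copositivity amounts to, extends to all of \<open>\<real>\<^sup>2\<close>. If \<open>A\<^sub>1\<^sub>2 \<ge> 0\<close>, a nonnegative integer vector with
  two nonzero coordinates has \<open>A[v] \<ge> A\<^sub>1\<^sub>1 + A\<^sub>2\<^sub>2\<close>, so all copositive minimal vectors lie on the
  axes and increasing \<open>A\<^sub>1\<^sub>2\<close> does not violate the copositive uniqueness condition.\<close>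

section \<open>Quadratic forms of matrices of arbitrary size\<close>

lemma qf_diff: "qf (A - B) x = qf A x - qf B x"
  by (simp add: qf_def matrix_vector_mult_diff_rdistrib inner_diff_right)

lemma qf_scaleR_matrix: "qf (c *\<^sub>R A) x = c * qf A x"
  by (simp add: qf_def scaleR_matrix_vector_assoc[symmetric])

lemma qf_scaleR: "qf A (c *\<^sub>R x) = c\<^sup>2 * qf A x"
  by (simp add: qf_def matrix_vector_mult_scaleR power2_eq_square)

lemma qf_mat_1: "qf (mat 1) x = (norm x)\<^sup>2"
  by (simp add: qf_def power2_norm_eq_inner)

lemma qf_zero [simp]: "qf A 0 = 0"
  by (simp add: qf_def)

lemma continuous_on_qf: "continuous_on S (qf A)"
  unfolding qf_def
  by (intro continuous_intros linear_continuous_on) (simp add: linear_conv_bounded_linear[symmetric])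

lemma norm_matrix_vector_mult_le:
  fixes A :: "real^'n^'m"
  shows "norm (A *v x) \<le> norm A * norm x"
proof -
  have "norm (A *v x) = L2_set (\<lambda>i. \<bar>A $ i \<bullet> x\<bar>) UNIV"
    by (simp add: norm_vec_def matrix_mult_dot)
  also have "\<dots> \<le> L2_set (\<lambda>i. norm (A $ i) * norm x) UNIV"
    by (rule L2_set_mono) (simp_all add: Cauchy_Schwarz_ineq2)
  also have "\<dots> = norm A * norm x"
    by (simp add: L2_set_left_distrib norm_vec_def)
  finally show ?thesis .
qed

lemma abs_qf_le: "\<bar>qf A x\<bar> \<le> norm A * (norm x)\<^sup>2"
proof -
  have "\<bar>qf A x\<bar> \<le> norm x * norm (A *v x)"
    unfolding qf_def by (rule Cauchy_Schwarz_ineq2)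
  also have "\<dots> \<le> norm x * (norm A * norm x)"
    by (simp add: mult_left_mono norm_matrix_vector_mult_le)
  finally show ?thesis
    by (simp add: power2_eq_square algebra_simps)
qed

lemma strictly_copositive_iff_uniform:
  fixes A :: "real^'n^'n"
  shows "strictly_copositive A \<longleftrightarrow>
    symm A \<and> (\<exists>t>0. \<forall>x. nonneg_vec x \<longrightarrow> t * (norm x)\<^sup>2 \<le> qf A x)"
proof
  assume "strictly_copositive A"
  then obtain e where "symm A" "e > 0"
    and near: "\<And>B. symm B \<Longrightarrow> norm (B - A) < e \<Longrightarrow> copositive B"
    unfolding strictly_copositive_def by blast
  define I :: "real^'n^'n" where "I = mat 1"
  have "I \<noteq> 0"
    by (simp add: I_def vec_eq_iff mat_def)
  define t where "t = e / (2 * norm I)"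
  have "t > 0"
    using \<open>e > 0\<close> \<open>I \<noteq> 0\<close> by (simp add: t_def)
  have "symm (A - t *\<^sub>R I)"
    using \<open>symm A\<close> by (simp add: symm_def I_def vec_eq_iff transpose_def mat_def)
  moreover have "norm ((A - t *\<^sub>R I) - A) < e"
    using \<open>e > 0\<close> \<open>I \<noteq> 0\<close> \<open>t > 0\<close> by (simp add: t_def)
  ultimately have "copositive (A - t *\<^sub>R I)"
    by (rule near)
  then have "\<forall>x. nonneg_vec x \<longrightarrow> t * (norm x)\<^sup>2 \<le> qf A x"
    by (simp add: copositive_def qf_diff qf_scaleR_matrix qf_mat_1 I_def)
  with \<open>symm A\<close> \<open>t > 0\<close> show "symm A \<and> (\<exists>t>0. \<forall>x. nonneg_vec x \<longrightarrow> t * (norm x)\<^sup>2 \<le> qf A x)"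
    by blast
next
  assume "symm A \<and> (\<exists>t>0. \<forall>x. nonneg_vec x \<longrightarrow> t * (norm x)\<^sup>2 \<le> qf A x)"
  then obtain t where "symm A" "t > 0" and margin: "\<And>x. nonneg_vec x \<Longrightarrow> t * (norm x)\<^sup>2 \<le> qf A x"
    by blast
  have "copositive B" if "symm B" "norm (B - A) < t" for B
    unfolding copositive_def
  proof (intro conjI allI impI)
    fix x :: "real^'n"
    assume "nonneg_vec x"
    have "norm (B - A) * (norm x)\<^sup>2 \<le> t * (norm x)\<^sup>2"
      using \<open>norm (B - A) < t\<close> by (simp add: mult_right_mono)
    then have "0 \<le> qf A x + qf (B - A) x"
      using margin[OF \<open>nonneg_vec x\<close>] abs_qf_le[of "B - A" x] by linarith
    then show "0 \<le> qf B x"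
      by (simp add: qf_diff)
  qed fact
  with \<open>symm A\<close> \<open>t > 0\<close> show "strictly_copositive A"
    unfolding strictly_copositive_def by blast
qed

lemma strictly_copositive_imp_copositive: "strictly_copositive A \<Longrightarrow> copositive A"
  unfolding strictly_copositive_def by force

lemma pos_def_coercive:
  fixes A :: "real^'n^'n"
  assumes "pos_def A"
  obtains t where "t > 0" "\<And>x. t * (norm x)\<^sup>2 \<le> qf A x"
proof -
  have "sphere 0 1 \<noteq> ({} :: (real^'n) set)"
    using norm_axis_1 by (metis mem_sphere_0 empty_iff)
  then obtain u :: "real^'n" where u: "u \<in> sphere 0 1" and min: "\<And>y. y \<in> sphere 0 1 \<Longrightarrow> qf A u \<le> qf A y"
    using continuous_attains_inf[OF compact_sphere _ continuous_on_qf] by blast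
  have "u \<noteq> 0"
    using u by auto
  then have "qf A u > 0"
    using assms by (simp add: pos_def_def)
  moreover have "qf A u * (norm x)\<^sup>2 \<le> qf A x" for x
  proof (cases "x = 0")
    case False
    have "qf A x = qf A (norm x *\<^sub>R (x /\<^sub>R norm x))"
      using False by simp
    also have "\<dots> = (norm x)\<^sup>2 * qf A (x /\<^sub>R norm x)"
      by (rule qf_scaleR)
    finally have "qf A x = (norm x)\<^sup>2 * qf A (x /\<^sub>R norm x)" .
    moreover have "qf A u \<le> qf A (x /\<^sub>R norm x)"
      using False by (intro min) simp
    ultimately show ?thesis
      by (metis mult.commute mult_left_mono zero_le_power2)
  qed simp
  ultimately show thesis
    by (rule that)
qed

lemma pos_def_imp_strictly_copositive:
  assumes "pos_def A"
  shows "strictly_copositive A"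
proof -
  obtain t where "t > 0" "\<And>x. t * (norm x)\<^sup>2 \<le> qf A x"
    using pos_def_coercive[OF assms] by blast
  then show ?thesis
    using assms by (auto simp: strictly_copositive_iff_uniform pos_def_def)
qed

definition abs_vec :: "real^'n \<Rightarrow> real^'n" where
  "abs_vec x = (\<chi> i. \<bar>x $ i\<bar>)"

lemma abs_vec_nth [simp]: "abs_vec x $ i = \<bar>x $ i\<bar>"
  by (simp add: abs_vec_def)

lemma int_vec_abs_vec: "int_vec x \<Longrightarrow> int_vec (abs_vec x)"
  by (simp add: int_vec_def)

lemma nonneg_vec_abs_vec: "nonneg_vec (abs_vec x)"
  by (simp add: nonneg_vec_def)

lemma abs_vec_eq_0_iff [simp]: "abs_vec x = 0 \<longleftrightarrow> x = 0"
  by (simp add: vec_eq_iff)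

lemma norm_abs_vec [simp]: "norm (abs_vec x) = norm x"
  by (simp add: norm_vec_def)

section \<open>Binary quadratic forms\<close>

lemma qf_2: "qf (B::real^2^2) x = B$1$1 * (x$1)\<^sup>2 + (B$1$2 + B$2$1) * (x$1 * x$2) + B$2$2 * (x$2)\<^sup>2"
  unfolding qf_def inner_vec_def matrix_vector_mult_def
  by (simp add: sum_2 algebra_simps power2_eq_square)

lemma symm_2: "symm (A::real^2^2) \<longleftrightarrow> A$2$1 = A$1$2"
  unfolding symm_def by (auto simp: vec_eq_iff forall_2 transpose_def)

lemma vec_eq_2: "(x::real^2) = y \<longleftrightarrow> x$1 = y$1 \<and> x$2 = y$2"
  by (simp add: vec_eq_iff forall_2)

text \<open>Passing to the absolute value only changes the cross term \<open>2 A\<^sub>1\<^sub>2 x\<^sub>1 x\<^sub>2\<close>.\<close>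

lemma qf_abs_vec_le:
  fixes A :: "real^2^2"
  assumes "symm A" "A$1$2 \<le> 0"
  shows "qf A (abs_vec x) \<le> qf A x"
proof -
  have "x$1 * x$2 \<le> \<bar>x$1\<bar> * \<bar>x$2\<bar>"
    by (metis abs_ge_self abs_mult)
  then have "A$1$2 * (\<bar>x$1\<bar> * \<bar>x$2\<bar>) \<le> A$1$2 * (x$1 * x$2)"
    using assms(2) by (simp add: mult_left_mono_neg)
  then show ?thesis
    using assms(1) by (simp add: qf_2 symm_2 power2_abs)
qed

lemma qf_abs_vec_less:
  fixes A :: "real^2^2"
  assumes "symm A" "A$1$2 < 0" "x$1 * x$2 < 0"
  shows "qf A (abs_vec x) < qf A x"
proof -
  have "x$1 * x$2 < \<bar>x$1\<bar> * \<bar>x$2\<bar>"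
    using assms(3) by (simp add: abs_mult[symmetric])
  then have "A$1$2 * (\<bar>x$1\<bar> * \<bar>x$2\<bar>) < A$1$2 * (x$1 * x$2)"
    using assms(2) by (simp add: mult_less_cancel_left_neg)
  then show ?thesis
    using assms(1) by (simp add: qf_2 symm_2 power2_abs)
qed

lemma qf_abs_vec_eq:
  assumes "0 \<le> x$1 * x$2"
  shows "qf (B::real^2^2) (abs_vec x) = qf B x"
proof -
  have "\<bar>x$1\<bar> * \<bar>x$2\<bar> = x$1 * x$2"
    using assms by (metis abs_mult abs_of_nonneg)
  then show ?thesis
    by (simp add: qf_2 power2_abs)
qed

section \<open>Classical versus copositive minimum\<close>

lemma min_cop_le:
  assumes "copositive A" "int_vec v" "nonneg_vec v" "v \<noteq> 0"
  shows "min_cop A \<le> qf A v"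
  unfolding min_cop_def
  by (rule cInf_lower) (use assms in \<open>auto simp: copositive_def intro!: bdd_belowI[of _ 0]\<close>)

lemma min_cl_eq_min_cop:
  fixes A :: "real^2^2"
  assumes "copositive A" "A$1$2 \<le> 0"
  shows "min_cl A = min_cop A"
proof -
  let ?C = "{qf A v | v. int_vec v \<and> v \<noteq> 0}"
  let ?P = "{qf A v | v. int_vec v \<and> nonneg_vec v \<and> v \<noteq> 0}"
  have "symm A"
    using assms(1) by (simp add: copositive_def)
  have abs_le: "qf A (abs_vec v) \<le> qf A v" for v
    using qf_abs_vec_le[OF \<open>symm A\<close> assms(2)] .
  have "int_vec (vector [1, 0] :: real^2) \<and> nonneg_vec (vector [1, 0] :: real^2) \<and> (vector [1, 0] :: real^2) \<noteq> 0"
    by (auto simp: int_vec_def nonneg_vec_def forall_2 vec_eq_2)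
  then have "?P \<noteq> {}"
    by blast
  have "?P \<subseteq> ?C"
    by blast
  have "bdd_below ?C"
  proof (rule bdd_belowI[of _ 0])
    fix s
    assume "s \<in> ?C"
    then obtain v where "s = qf A v"
      by blast
    moreover have "0 \<le> qf A (abs_vec v)"
      using assms(1) nonneg_vec_abs_vec[of v] unfolding copositive_def by blast
    ultimately show "0 \<le> s"
      using abs_le[of v] by simp
  qed
  then have "Inf ?C \<le> Inf ?P"
    using cInf_superset_mono[OF \<open>?P \<noteq> {}\<close> _ \<open>?P \<subseteq> ?C\<close>] by blast
  moreover have "Inf ?P \<le> Inf ?C"
  proof (rule cInf_greatest)
    show "?C \<noteq> {}"
      using \<open>?P \<noteq> {}\<close> \<open>?P \<subseteq> ?C\<close> by blast
  next
    fix s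
    assume "s \<in> ?C"
    then obtain v where v: "s = qf A v" "int_vec v" "v \<noteq> 0"
      by blast
    have "Inf ?P \<le> qf A (abs_vec v)"
      using min_cop_le[OF assms(1) int_vec_abs_vec[OF v(2)] nonneg_vec_abs_vec] v(3)
      by (simp add: min_cop_def)
    then show "Inf ?P \<le> s"
      using abs_le[of v] v(1) by simp
  qed
  ultimately show ?thesis
    unfolding min_cl_def min_cop_def by simp
qed

text \<open>For a negative off-diagonal entry the classical minimal vectors are, up to sign, the
  copositive ones, so both perfection conditions impose the same constraints.\<close>

lemma Min_cl_conditions_iff_Min_cop_conditions:
  fixes A :: "real^2^2"
  assumes "copositive A" "A$1$2 < 0"
  shows "(\<forall>v\<in>Min_cl A. qf Q v = min_cl A) \<longleftrightarrow> (\<forall>v\<in>Min_cop A. qf Q v = min_cop A)"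
proof -
  have "symm A"
    using assms(1) by (simp add: copositive_def)
  have min_eq: "min_cl A = min_cop A"
    using min_cl_eq_min_cop assms by simp
  have "Min_cop A \<subseteq> Min_cl A"
    using min_eq by (auto simp: Min_cop_def Min_cl_def)
  moreover have "qf Q v = min_cl A"
    if cop: "\<forall>v\<in>Min_cop A. qf Q v = min_cop A" and v: "v \<in> Min_cl A" "v \<noteq> 0" for v
  proof -
    have "int_vec v" "qf A v = min_cop A"
      using v min_eq by (auto simp: Min_cl_def)
    moreover have "min_cop A \<le> qf A (abs_vec v)"
      using min_cop_le[OF assms(1) int_vec_abs_vec nonneg_vec_abs_vec] \<open>int_vec v\<close> v(2) by simp
    ultimately have abs_min: "qf A (abs_vec v) = min_cop A"
      using qf_abs_vec_le[OF \<open>symm A\<close>, of v] assms(2) by simp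
    then have "0 \<le> v$1 * v$2"
      using qf_abs_vec_less[OF \<open>symm A\<close> assms(2)] \<open>qf A v = min_cop A\<close> by (metis less_irrefl not_le)
    then have "qf Q v = qf Q (abs_vec v)"
      by (simp add: qf_abs_vec_eq)
    also have "\<dots> = min_cop A"
      using cop abs_min \<open>int_vec v\<close> by (simp add: Min_cop_def int_vec_abs_vec nonneg_vec_abs_vec)
    finally show ?thesis
      using min_eq by simp
  qed
  moreover have "qf Q 0 = min_cl A" if "0 \<in> Min_cl A"
    using that by (simp add: Min_cl_def)
  ultimately show ?thesis
    using min_eq by (metis subsetD)
qed

section \<open>The two-dimensional characterization\<close>

lemma strictly_copositive_offdiag_nonpos_imp_pos_def:
  fixes A :: "real^2^2"
  assumes "strictly_copositive A" "A$1$2 \<le> 0"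
  shows "pos_def A"
proof -
  obtain t where "symm A" "t > 0" and margin: "\<And>x. nonneg_vec x \<Longrightarrow> t * (norm x)\<^sup>2 \<le> qf A x"
    using assms(1) by (auto simp: strictly_copositive_iff_uniform)
  have "0 < qf A x" if "x \<noteq> 0" for x
  proof -
    have "0 < t * (norm (abs_vec x))\<^sup>2"
      using \<open>t > 0\<close> that by simp
    also have "\<dots> \<le> qf A (abs_vec x)"
      using margin nonneg_vec_abs_vec by blast
    also have "\<dots> \<le> qf A x"
      using qf_abs_vec_le[OF \<open>symm A\<close> assms(2)] .
    finally show ?thesis .
  qed
  with \<open>symm A\<close> show ?thesis
    by (simp add: pos_def_def)
qed

text \<open>A nonnegative integer vector with two nonzero coordinates has both coordinates at least 1,
  so for a nonnegative off-diagonal entry its value exceeds \<open>A\<^sub>1\<^sub>1 \<ge> min_cop A\<close>.\<close>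

lemma Min_cop_on_axes:
  fixes A :: "real^2^2"
  assumes "copositive A" "0 \<le> A$1$2" "0 < A$1$1" "0 < A$2$2"
    and "v \<in> Min_cop A"
  shows "v$1 * v$2 = 0"
proof (rule ccontr)
  assume "v$1 * v$2 \<noteq> 0"
  have v: "int_vec v" "nonneg_vec v" "qf A v = min_cop A"
    using assms(5) by (auto simp: Min_cop_def)
  have "1 \<le> v$i" if "v$i \<noteq> 0" for i
    using Ints_nonzero_abs_ge1[of "v$i"] that v(1,2) by (simp add: int_vec_def nonneg_vec_def)
  then have "1 \<le> v$1" "1 \<le> v$2"
    using \<open>v$1 * v$2 \<noteq> 0\<close> by auto
  then have "A$1$1 \<le> A$1$1 * (v$1)\<^sup>2" "A$2$2 \<le> A$2$2 * (v$2)\<^sup>2" "0 \<le> A$1$2 * (v$1 * v$2)"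
    using assms(2-4) by (simp_all add: one_le_power)
  then have "A$1$1 + A$2$2 \<le> qf A v"
    using assms(1) by (simp add: qf_2 symm_2 copositive_def)
  moreover have "min_cop A \<le> A$1$1"
    using min_cop_le[OF assms(1), of "vector [1, 0]"]
    by (simp add: int_vec_def nonneg_vec_def forall_2 vec_eq_2 qf_2)
  ultimately show False
    using v(3) assms(4) by linarith
qed

lemma perfect_copositive_offdiag_neg:
  fixes A :: "real^2^2"
  assumes "perfect_copositive A"
  shows "A$1$2 < 0"
proof (rule ccontr)
  assume "\<not> A$1$2 < 0"
  obtain t where "symm A" "t > 0" and margin: "\<And>x. nonneg_vec x \<Longrightarrow> t * (norm x)\<^sup>2 \<le> qf A x"
    using assms by (auto simp: perfect_copositive_def strictly_copositive_iff_uniform)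
  have "copositive A"
    using assms by (simp add: perfect_copositive_def strictly_copositive_imp_copositive)
  have "0 < A$1$1" "0 < A$2$2"
    using margin[of "vector [1, 0]"] margin[of "vector [0, 1]"] \<open>t > 0\<close>
    by (simp_all add: nonneg_vec_def forall_2 qf_2 norm_vec_def L2_set_def sum_2)
  text \<open>Raising the off-diagonal entry does not change the form on the coordinate axes.\<close>
  define Q :: "real^2^2" where "Q = (\<chi> i j. A$i$j + (if i = j then 0 else 1))"
  have "symm Q"
    using \<open>symm A\<close> by (simp add: Q_def symm_2)
  moreover have "Q$1$2 = A$1$2 + 1"
    by (simp add: Q_def)
  then have "Q \<noteq> A"
    by auto
  moreover have "qf Q v = min_cop A" if "v \<in> Min_cop A" for v
    using Min_cop_on_axes[OF \<open>copositive A\<close> _ \<open>0 < A$1$1\<close> \<open>0 < A$2$2\<close> that] \<open>\<not> A$1$2 < 0\<close> that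
    by (auto simp: Q_def qf_2 Min_cop_def)
  ultimately show False
    using assms by (auto simp: perfect_copositive_def)
qed

theorem theorem4p1:
  fixes A :: "real^2^2"
  assumes "symm A"
  shows "perfect_copositive A \<longleftrightarrow> perfect A \<and> A $ 1 $ 2 < 0"
proof
  assume PC: "perfect_copositive A"
  then have "strictly_copositive A"
    by (simp add: perfect_copositive_def)
  then have "copositive A"
    by (rule strictly_copositive_imp_copositive)
  have "A$1$2 < 0"
    using PC by (rule perfect_copositive_offdiag_neg)
  moreover have "pos_def A"
    using \<open>strictly_copositive A\<close> \<open>A$1$2 < 0\<close> by (simp add: strictly_copositive_offdiag_nonpos_imp_pos_def)
  ultimately show "perfect A \<and> A$1$2 < 0"
    using PC Min_cl_conditions_iff_Min_cop_conditions[OF \<open>copositive A\<close>]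
    by (auto simp: perfect_def perfect_copositive_def)
next
  assume "perfect A \<and> A$1$2 < 0"
  then have "pos_def A" "A$1$2 < 0" and uniq: "\<And>Q. symm Q \<Longrightarrow> \<forall>v\<in>Min_cl A. qf Q v = min_cl A \<Longrightarrow> Q = A"
    by (auto simp: perfect_def)
  from \<open>pos_def A\<close> have "strictly_copositive A"
    by (rule pos_def_imp_strictly_copositive)
  then have "copositive A"
    by (rule strictly_copositive_imp_copositive)
  then show "perfect_copositive A"
    using \<open>strictly_copositive A\<close> uniq
      Min_cl_conditions_iff_Min_cop_conditions[OF \<open>copositive A\<close> \<open>A$1$2 < 0\<close>]
    by (auto simp: perfect_copositive_def)
qed

end
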